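(* For every $\varepsilon>0$ there is a connected graph $G$ such that \[ \frac{\operatorname{mdim}(G)}{\operatorname{cdim}(G)}\leq\varepsilon. \]
   Context: All graphs are finite, simple, undirected and nonempty. For distinct vertices $v,w$, $\kappa(v,w)$ is the maximum number of internally vertex-disjoint $v$–$w$ paths (an edge $vw$ counts as one such path); $\kappa(v,v)=\infty$. For an ordered vertex set $W=(w_1,\ldots,w_k)$, $r_G(v,W)=[\kappa(v,w_1),\ldots,\kappa(v,w_k)]$. $W$ is resolving if $r_G(v_1,W)=r_G(v_2,W)$ implies $v_1=v_2$. The connectivity dimension $\operatorname{cdim}(G)$ is the minimum cardinality of a resolving set. The metric dimension $\operatorname{mdim}(G)$ of a connected graph is the minimum cardinality of a set $W=(w_1,\dots,w_k)$ such that the vectors $[d(v,w_1),\ldots,d(v,w_k)]$ of graph distances are pairwise distinct over $v\in V(G)$. *)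

theory Defs
  imports Main "HOL-Library.Extended_Nat"
begin

definition simple_graph :: "'a set \<Rightarrow> ('a \<Rightarrow> 'a \<Rightarrow> bool) \<Rightarrow> bool" where
  "simple_graph V E \<longleftrightarrow> finite V \<and> V \<noteq> {} \<and>
     (\<forall>x y. E x y \<longrightarrow> x \<in> V \<and> y \<in> V) \<and>
     (\<forall>x y. E x y \<longrightarrow> E y x) \<and> (\<forall>x. \<not> E x x)"

definition is_path :: "'a set \<Rightarrow> ('a \<Rightarrow> 'a \<Rightarrow> bool) \<Rightarrow> 'a list \<Rightarrow> bool" where
  "is_path V E p \<longleftrightarrow> p \<noteq> [] \<and> distinct p \<and> set p \<subseteq> V \<and>
     (\<forall>i. Suc i < length p \<longrightarrow> E (p ! i) (p ! Suc i))"

definition vw_path :: "'a set \<Rightarrow> ('a \<Rightarrow> 'a \<Rightarrow> bool) \<Rightarrow> 'a \<Rightarrow> 'a \<Rightarrow> 'a list \<Rightarrow> bool" where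
  "vw_path V E v w p \<longleftrightarrow> is_path V E p \<and> hd p = v \<and> last p = w"

definition interior :: "'a list \<Rightarrow> 'a set" where
  "interior p = set (butlast (tl p))"

definition graph_connected :: "'a set \<Rightarrow> ('a \<Rightarrow> 'a \<Rightarrow> bool) \<Rightarrow> bool" where
  "graph_connected V E \<longleftrightarrow> (\<forall>v\<in>V. \<forall>w\<in>V. \<exists>p. vw_path V E v w p)"

text \<open>Local connectivity kappa(v,w): maximum number of internally vertex-disjoint
v-w paths (a set of paths, so the edge vw counts once); infinity for v = w.\<close>
definition kappa :: "'a set \<Rightarrow> ('a \<Rightarrow> 'a \<Rightarrow> bool) \<Rightarrow> 'a \<Rightarrow> 'a \<Rightarrow> enat" where
  "kappa V E v w = (if v = w then \<infinity> else
     (SUP P \<in> {P. finite P \<and> (\<forall>p\<in>P. vw_path V E v w p) \<and>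
                 (\<forall>p\<in>P. \<forall>q\<in>P. p \<noteq> q \<longrightarrow> interior p \<inter> interior q = {})}.
        enat (card P)))"

definition gdist :: "'a set \<Rightarrow> ('a \<Rightarrow> 'a \<Rightarrow> bool) \<Rightarrow> 'a \<Rightarrow> 'a \<Rightarrow> nat" where
  "gdist V E v w = (LEAST n. \<exists>p. vw_path V E v w p \<and> length p = Suc n)"

definition resolving :: "'a set \<Rightarrow> ('a \<Rightarrow> 'a \<Rightarrow> 'b) \<Rightarrow> 'a set \<Rightarrow> bool" where
  "resolving V f W \<longleftrightarrow> W \<subseteq> V \<and>
     (\<forall>x\<in>V. \<forall>y\<in>V. (\<forall>w\<in>W. f x w = f y w) \<longrightarrow> x = y)"

definition cdim :: "'a set \<Rightarrow> ('a \<Rightarrow> 'a \<Rightarrow> bool) \<Rightarrow> nat" where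
  "cdim V E = (LEAST k. \<exists>W. resolving V (kappa V E) W \<and> card W = k)"

definition mdim :: "'a set \<Rightarrow> ('a \<Rightarrow> 'a \<Rightarrow> bool) \<Rightarrow> nat" where
  "mdim V E = (LEAST k. \<exists>W. resolving V (gdist V E) W \<and> card W = k)"

end

theory Submission
  imports Defs
begin

(* In the path P_n any two vertices are joined by exactly one path, so the local
   connectivity of two distinct vertices is always 1. Two vertices outside a set W are
   then not told apart by W, hence every kappa-resolving set misses at most one vertex
   and cdim P_n \<ge> n - 1. Distances from an end vertex, on the other hand, are pairwise
   distinct, so mdim P_n \<le> 1 and the ratio is at most 1/(n - 1). *)

lemma is_path_Cons_Cons:
  "is_path V E (x # y # ys) \<longleftrightarrow>
     x \<in> V \<and> x \<notin> set (y # ys) \<and> E x y \<and> is_path V E (y # ys)"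
  by (auto simp: is_path_def nth_Cons split: nat.splits)

lemma kappa_self [simp]: "kappa V E v v = \<infinity>"
  by (simp add: kappa_def)

lemma kappa_eq_1_if_unique_path:
  assumes "v \<noteq> w" and unique: "\<And>p. vw_path V E v w p \<longleftrightarrow> p = q"
  shows "kappa V E v w = 1"
proof -
  let ?S = "{P. finite P \<and> (\<forall>p\<in>P. vw_path V E v w p) \<and>
                 (\<forall>p\<in>P. \<forall>q\<in>P. p \<noteq> q \<longrightarrow> interior p \<inter> interior q = {})}"
  have "{q} \<in> ?S"
    using unique by auto
  moreover have "card P \<le> 1" if "P \<in> ?S" for P
  proof -
    have "P \<subseteq> {q}"
      using that unique by auto
    then show ?thesis
      using card_mono[of "{q}" P] by simp
  qed
  ultimately have "(SUP P \<in> ?S. enat (card P)) = 1"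
    by (intro antisym SUP_least) (force simp: one_enat_def intro: SUP_upper2)+
  then show ?thesis
    using \<open>v \<noteq> w\<close> by (simp add: kappa_def)
qed

lemma gdist_eq_if_unique_path:
  assumes "\<And>p. vw_path V E v w p \<longleftrightarrow> p = q"
  shows "gdist V E v w = length q - 1"
proof -
  have "q \<noteq> []"
    using assms by (auto simp: vw_path_def is_path_def)
  then show ?thesis
    unfolding gdist_def assms by (intro Least_equality) auto
qed

lemma card_minus_one_le_cdim:
  assumes "finite V"
    and kappa_const: "\<And>v w. v \<in> V \<Longrightarrow> w \<in> V \<Longrightarrow> v \<noteq> w \<Longrightarrow> kappa V E v w = enat c"
  shows "card V - 1 \<le> cdim V E"
proof -
  have "resolving V (kappa V E) V"
    unfolding resolving_def
  proof (intro conjI ballI impI)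
    fix x y assume "x \<in> V" "y \<in> V" and "\<forall>w\<in>V. kappa V E x w = kappa V E y w"
    then have "kappa V E y x = \<infinity>"
      using \<open>x \<in> V\<close> by (metis kappa_self)
    then show "x = y"
      using kappa_const[OF \<open>y \<in> V\<close> \<open>x \<in> V\<close>] by auto
  qed simp
  then have "\<exists>k W. resolving V (kappa V E) W \<and> card W = k"
    by blast
  then have "\<exists>W. resolving V (kappa V E) W \<and> card W = cdim V E"
    unfolding cdim_def by (rule LeastI_ex)
  then obtain W where W: "resolving V (kappa V E) W" "card W = cdim V E"
    by blast
  then have "W \<subseteq> V"
    unfolding resolving_def by blast
  have "card (V - W) \<le> 1"
  proof (rule card_le_Suc0_iff_eq[THEN iffD2, unfolded One_nat_def[symmetric]])
    show "finite (V - W)"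
      using \<open>finite V\<close> by simp
    show "\<forall>x\<in>V - W. \<forall>y\<in>V - W. x = y"
    proof (intro ballI)
      fix x y assume "x \<in> V - W" "y \<in> V - W"
      then have "\<forall>w\<in>W. kappa V E x w = kappa V E y w"
        using \<open>W \<subseteq> V\<close> kappa_const by (metis DiffD1 DiffD2 subsetD)
      then show "x = y"
        using W(1) \<open>x \<in> V - W\<close> \<open>y \<in> V - W\<close> unfolding resolving_def by blast
    qed
  qed
  then show ?thesis
    using W(2) \<open>W \<subseteq> V\<close> \<open>finite V\<close> by (simp add: card_Diff_subset finite_subset)
qed

definition path_graph :: "nat \<Rightarrow> nat \<Rightarrow> nat \<Rightarrow> bool" where
  "path_graph n x y \<longleftrightarrow> x < n \<and> y < n \<and> (y = Suc x \<or> x = Suc y)"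

definition straight_path :: "nat \<Rightarrow> nat \<Rightarrow> nat list" where
  "straight_path a b = (if a \<le> b then [a..<Suc b] else rev [b..<Suc a])"

lemma length_straight_path: "length (straight_path a b) = Suc (max a b - min a b)"
  by (simp add: straight_path_def)

lemma Cons_straight_path:
  assumes "y = Suc a \<or> a = Suc y" and "a \<notin> set (straight_path y b)"
  shows "a # straight_path y b = straight_path a b"
  using assms by (auto simp: straight_path_def upt_conv_Cons)

lemma vw_path_straight_path:
  assumes "a < n" "b < n"
  shows "vw_path {..<n} (path_graph n) a b (straight_path a b)"
  using assms
  by (auto simp: vw_path_def is_path_def straight_path_def path_graph_def
      hd_rev last_rev rev_nth nth_upt hd_upt last_upt simp del: upt_Suc)

lemma path_graph_vw_path_eq_straight_path:
  "vw_path V (path_graph n) a b p \<Longrightarrow> p = straight_path a b"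
proof (induction p arbitrary: a)
  case Nil
  then show ?case
    by (simp add: vw_path_def is_path_def)
next
  case (Cons x p)
  then have "x = a"
    by (simp add: vw_path_def)
  show ?case
  proof (cases p)
    case Nil
    then show ?thesis
      using Cons.prems \<open>x = a\<close> by (simp add: vw_path_def straight_path_def)
  next
    case (Cons y ys)
    with Cons.prems \<open>x = a\<close>
    have "path_graph n a y" "a \<notin> set p" "vw_path V (path_graph n) y b p"
      by (auto simp: vw_path_def is_path_Cons_Cons)
    then have "p = straight_path y b" "y = Suc a \<or> a = Suc y"
      using Cons.IH by (blast, simp add: path_graph_def)
    then show ?thesis
      using \<open>a \<notin> set p\<close> \<open>x = a\<close> Cons_straight_path by auto
  qed
qed


lemma path_graph_vw_path_iff:
  assumes "a < n" "b < n"
  shows "vw_path {..<n} (path_graph n) a b p \<longleftrightarrow> p = straight_path a b"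
  using assms path_graph_vw_path_eq_straight_path vw_path_straight_path by blast

lemma kappa_path_graph:
  "a < n \<Longrightarrow> b < n \<Longrightarrow> a \<noteq> b \<Longrightarrow> kappa {..<n} (path_graph n) a b = 1"
  by (rule kappa_eq_1_if_unique_path[OF _ path_graph_vw_path_iff])

lemma gdist_path_graph:
  "a < n \<Longrightarrow> b < n \<Longrightarrow> gdist {..<n} (path_graph n) a b = max a b - min a b"
  by (simp add: gdist_eq_if_unique_path[OF path_graph_vw_path_iff] length_straight_path)

lemma cdim_path_graph: "n - 1 \<le> cdim {..<n} (path_graph n)"
  using card_minus_one_le_cdim[of "{..<n}" "path_graph n" 1] kappa_path_graph
  by (simp add: one_enat_def)

lemma mdim_path_graph:
  assumes "0 < n"
  shows "mdim {..<n} (path_graph n) \<le> 1"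
proof -
  have "resolving {..<n} (gdist {..<n} (path_graph n)) {0}"
    using assms by (simp add: resolving_def gdist_path_graph)
  then have "\<exists>W. resolving {..<n} (gdist {..<n} (path_graph n)) W \<and> card W = 1"
    by (intro exI[of _ "{0}"]) simp
  then show ?thesis
    unfolding mdim_def by (rule Least_le)
qed

lemma simple_graph_path_graph: "0 < n \<Longrightarrow> simple_graph {..<n} (path_graph n)"
  by (auto simp: simple_graph_def path_graph_def)

lemma graph_connected_path_graph: "graph_connected {..<n} (path_graph n)"
  unfolding graph_connected_def using vw_path_straight_path by blast

theorem mainTheorem8:
  fixes \<epsilon> :: real
  assumes "\<epsilon> > 0"
  shows "\<exists>(V :: nat set) E. simple_graph V E \<and> graph_connected V E \<and>
           cdim V E > 0 \<and> real (mdim V E) / real (cdim V E) \<le> \<epsilon>"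
proof -
  obtain m :: nat where m: "1 / \<epsilon> < real m"
    using reals_Archimedean2 by blast
  define n where "n = m + 2"
  have cdim: "m + 1 \<le> cdim {..<n} (path_graph n)"
    using cdim_path_graph[of n] by (simp add: n_def)
  have "real (mdim {..<n} (path_graph n)) / real (cdim {..<n} (path_graph n))
        \<le> 1 / real (cdim {..<n} (path_graph n))"
    using mdim_path_graph[of n] by (simp add: n_def divide_right_mono)
  also have "\<dots> \<le> 1 / real (m + 1)"
    using cdim by (simp add: frac_le)
  also have "\<dots> \<le> \<epsilon>"
    using m \<open>\<epsilon> > 0\<close> by (simp add: field_simps)
  finally show ?thesis
    using simple_graph_path_graph[of n] graph_connected_path_graph[of n] cdim
    by (intro exI[of _ "{..<n}"] exI[of _ "path_graph n"]) (simp add: n_def)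
qed

end
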